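(* Let $a>1$. Then $S_n$, $S_n^+$, $B_1$, $G_4$, $H_4$ has the maximum value of $SEI_a$ among all $n$-vertex trees, unicyclic graphs, bicyclic graphs, tricyclic graphs and tetracyclic graphs, respectively.
   Context: All graphs are finite, simple, undirected and connected. A connected graph with $n$ vertices and $m$ edges is a tree, unicyclic, bicyclic, tricyclic, tetracyclic graph if $m=n-1,n,n+1,n+2,n+3$ respectively. The variable sum exdeg index is $SEI_a(G)=\sum_{uv\in E(G)}(a^{d_u}+a^{d_v})$, $d_u$ the degree of $u$. $S_n$ is the star on $n$ vertices. The following graphs are obtained from $S_n$ by adding edges between leaves: $S_n^+$: add one edge; $B_1$: add two edges sharing a common leaf; $G_4$: join one leaf to three other leaves (exists for $n\ge5$); $H_4$: join one leaf to four other leaves (exists for $n\ge 6$). Each statement is for those $n$ for which the respective graph exists. *)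

theory Defs
  imports Complex_Main
begin

definition simple_graph :: "'a set \<Rightarrow> 'a set set \<Rightarrow> bool" where
  "simple_graph V E \<longleftrightarrow> finite V \<and> (\<forall>e\<in>E. e \<subseteq> V \<and> card e = 2)"

definition adj_rel :: "'a set set \<Rightarrow> ('a \<times> 'a) set" where
  "adj_rel E = {(u, v). {u, v} \<in> E}"

definition connected_graph :: "'a set \<Rightarrow> 'a set set \<Rightarrow> bool" where
  "connected_graph V E \<longleftrightarrow> simple_graph V E \<and> V \<noteq> {} \<and>
     (\<forall>u\<in>V. \<forall>v\<in>V. (u, v) \<in> (adj_rel E)\<^sup>*)"

definition degree :: "'a set set \<Rightarrow> 'a \<Rightarrow> nat" where
  "degree E v = card {e \<in> E. v \<in> e}"

definition SEI :: "real \<Rightarrow> 'a set set \<Rightarrow> real" where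
  "SEI a E = (\<Sum>e\<in>E. \<Sum>v\<in>e. a ^ degree E v)"

text \<open>Connected graphs with n vertices and n - 1 + c edges (c = 0: trees,
 1: unicyclic, 2: bicyclic, 3: tricyclic, 4: tetracyclic).\<close>
definition cyc_class :: "nat \<Rightarrow> nat \<Rightarrow> 'a set \<Rightarrow> 'a set set \<Rightarrow> bool" where
  "cyc_class c n V E \<longleftrightarrow> connected_graph V E \<and> card V = n \<and> card E + 1 = n + c"

definition star_V :: "nat \<Rightarrow> nat set" where
  "star_V n = {0..<n}"

definition star_E :: "nat \<Rightarrow> nat set set" where
  "star_E n = {{0, i} | i. 1 \<le> i \<and> i < n}"

definition Sn_plus_E :: "nat \<Rightarrow> nat set set" where
  "Sn_plus_E n = star_E n \<union> {{1, 2}}"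

definition B1_E :: "nat \<Rightarrow> nat set set" where
  "B1_E n = star_E n \<union> {{1, 2}, {1, 3}}"

definition G4_E :: "nat \<Rightarrow> nat set set" where
  "G4_E n = star_E n \<union> {{1, 2}, {1, 3}, {1, 4}}"

definition H4_E :: "nat \<Rightarrow> nat set set" where
  "H4_E n = star_E n \<union> {{1, 2}, {1, 3}, {1, 4}, {1, 5}}"

definition is_SEI_max :: "real \<Rightarrow> nat \<Rightarrow> nat \<Rightarrow> nat set \<Rightarrow> nat set set \<Rightarrow> 'a itself \<Rightarrow> bool" where
  "is_SEI_max a c n V0 E0 _ \<longleftrightarrow> cyc_class c n V0 E0 \<and>
     (\<forall>(V :: 'a set) E. cyc_class c n V E \<longrightarrow> SEI a E \<le> SEI a E0)"

end

theory Submission imports Defs begin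

text \<open>Write \<open>SEI\<^sub>a(G) = \<Sum>\<^sub>v d\<^sub>v a\<^bsup>d\<^sub>v\<^esup>\<close> and \<open>g(t) = (t+1) a\<^bsup>t+1\<^esup> - a\<close>;
for \<open>a > 1\<close> both \<open>g\<close> and its sequence of increments are convex. For \<open>n \<ge> 2\<close> every vertex of a connected graph
has degree at least 1, so \<open>SEI\<^sub>a(G) = n a + \<Sum>\<^sub>v g(d\<^sub>v - 1)\<close>. Let \<open>w\<close> be a vertex of maximum
degree \<open>d\<close>. Choosing for every other vertex an edge towards \<open>w\<close> (the edge to \<open>w\<close> itself when
there is one) gives \<open>n - 1\<close> edges containing all edges at \<open>w\<close>; the remaining \<open>c\<close> edges \<open>H\<close>
avoid \<open>w\<close>. By convexity of \<open>g\<close>, the surplus \<open>\<Sum>\<^sub>v (d\<^sub>v - 1 - d\<^sub>H(v)) = n - 1 - d\<close> is best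
moved onto \<open>w\<close>, which yields \<open>g(n-2)\<close>, and by convexity of the increments the \<open>c\<close> edges of \<open>H\<close>
contribute at most as much as a star with \<open>c\<close> edges, namely \<open>g(c) + c g(1)\<close>. This bound is
attained by the star in which one leaf is joined to \<open>c\<close> further leaves.\<close>

definition discrete_convex :: "(nat \<Rightarrow> real) \<Rightarrow> bool" where
  "discrete_convex \<phi> \<longleftrightarrow> (\<forall>t. \<phi> (t+1) - \<phi> t \<le> \<phi> (t+2) - \<phi> (t+1))"

lemma discrete_convex_increment_mono:
  assumes "discrete_convex \<phi>" "s \<le> t"
  shows "\<phi> (s+1) - \<phi> s \<le> \<phi> (t+1) - \<phi> t"
  using assms(2)
proof (induction t rule: dec_induct)
  case (step t)
  have "\<phi> (t+1) - \<phi> t \<le> \<phi> (t+2) - \<phi> (t+1)"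
    using assms(1) unfolding discrete_convex_def by blast
  then show ?case using step by simp
qed simp

lemma discrete_convex_difference_mono:
  assumes "discrete_convex \<phi>" "p \<le> q"
  shows "\<phi> (p+u) - \<phi> p \<le> \<phi> (q+u) - \<phi> q"
proof (induction u)
  case (Suc u)
  have "\<phi> (p+u+1) - \<phi> (p+u) \<le> \<phi> (q+u+1) - \<phi> (q+u)"
    using discrete_convex_increment_mono[OF assms(1), of "p+u" "q+u"] assms(2) by simp
  then show ?case using Suc by simp
qed simp

lemma sum_discrete_convex_le_concentrated:
  fixes \<phi> :: "nat \<Rightarrow> real"
  assumes "discrete_convex \<phi>" "finite S"
    and "\<forall>v\<in>S. h v \<le> y v \<and> y v \<le> X" "sum y S = sum h S + D"
  shows "(\<Sum>v\<in>S. \<phi> (y v)) \<le> (\<Sum>v\<in>S. \<phi> (h v)) + \<phi> (X + D) - \<phi> X"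
  using assms(2-4)
proof (induction S arbitrary: D rule: finite_induct)
  case (insert v S)
  define D' where "D' = sum y S - sum h S"
  have D': "sum y S = sum h S + D'"
    using insert.prems(1) sum_mono[of S h y] D'_def by force
  have hv: "h v \<le> y v" "y v \<le> X" using insert.prems by auto
  have D: "D = D' + (y v - h v)" using insert.prems(2) insert.hyps D' hv by simp
  have IH: "(\<Sum>v\<in>S. \<phi> (y v)) \<le> (\<Sum>v\<in>S. \<phi> (h v)) + \<phi> (X + D') - \<phi> X"
    using insert.IH[OF _ D'] insert.prems by auto
  have "\<phi> (h v + (y v - h v)) - \<phi> (h v) \<le> \<phi> (X + D' + (y v - h v)) - \<phi> (X + D')"
    using discrete_convex_difference_mono[OF assms(1), of "h v" "X + D'" "y v - h v"] hv
    by linarith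
  then have "\<phi> (y v) - \<phi> (h v) \<le> \<phi> (X + D) - \<phi> (X + D')"
    using hv D by (simp add: add.assoc)
  then show ?case using IH insert.hyps by simp
qed simp

definition sei_term :: "real \<Rightarrow> nat \<Rightarrow> real" where
  "sei_term a t = real t * a ^ t"

definition sei_excess :: "real \<Rightarrow> nat \<Rightarrow> real" where
  "sei_excess a t = sei_term a (t+1) - sei_term a 1"

lemma sei_excess_0 [simp]: "sei_excess a 0 = 0"
  unfolding sei_excess_def by simp

lemma sei_term_second_difference:
  "sei_term a (t+2) - 2 * sei_term a (t+1) + sei_term a t
    = a^t * ((a-1) * (real t * (a-1) + 2*a))"
  unfolding sei_term_def by (simp add: power_add algebra_simps power2_eq_square)

lemma sei_term_third_difference:
  "sei_term a (t+3) - 3 * sei_term a (t+2) + 3 * sei_term a (t+1) - sei_term a t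
    = a^t * ((a-1)^2 * (real t * (a-1) + 3*a))"
  unfolding sei_term_def by (simp add: power_add algebra_simps power2_eq_square numeral_3_eq_3)

lemma discrete_convex_sei_excess:
  assumes "a > 1"
  shows "discrete_convex (sei_excess a)"
  unfolding discrete_convex_def
proof
  fix t
  have "0 \<le> a^(t+1) * ((a-1) * (real (t+1) * (a-1) + 2*a))"
    using assms by (intro mult_nonneg_nonneg) auto
  then have "0 \<le> sei_term a (t+1+2) - 2 * sei_term a (t+1+1) + sei_term a (t+1)"
    by (simp only: sei_term_second_difference)
  then show "sei_excess a (t+1) - sei_excess a t \<le> sei_excess a (t+2) - sei_excess a (t+1)"
    unfolding sei_excess_def by (simp add: algebra_simps)
qed

lemma discrete_convex_sei_excess_increment:
  assumes "a > 1"
  shows "discrete_convex (\<lambda>t. sei_excess a (t+1) - sei_excess a t)"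
  unfolding discrete_convex_def
proof
  fix t
  have "0 \<le> a^(t+1) * ((a-1)^2 * (real (t+1) * (a-1) + 3*a))"
    using assms by (intro mult_nonneg_nonneg) auto
  then have "0 \<le> sei_term a (t+1+3) - 3 * sei_term a (t+1+2) + 3 * sei_term a (t+1+1) - sei_term a (t+1)"
    by (simp only: sei_term_third_difference)
  then show "sei_excess a (t+1+1) - sei_excess a (t+1) - (sei_excess a (t+1) - sei_excess a t)
      \<le> sei_excess a (t+2+1) - sei_excess a (t+2) - (sei_excess a (t+1+1) - sei_excess a (t+1))"
    unfolding sei_excess_def by (simp add: algebra_simps numeral_3_eq_3)
qed

lemma simple_graph_finite_edges:
  assumes "simple_graph V E"
  shows "finite E"
  using assms unfolding simple_graph_def
  by (meson PowI finite_Pow_iff finite_subset subsetI)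

lemma sum_edges_eq_sum_degree:
  fixes \<phi> :: "'a \<Rightarrow> 'b::comm_semiring_1"
  assumes "finite V" "finite E" "\<forall>e\<in>E. e \<subseteq> V"
  shows "(\<Sum>e\<in>E. \<Sum>v\<in>e. \<phi> v) = (\<Sum>v\<in>V. of_nat (degree E v) * \<phi> v)"
proof -
  have "(\<Sum>e\<in>E. \<Sum>v\<in>e. \<phi> v) = (\<Sum>e\<in>E. \<Sum>v\<in>V. if v \<in> e then \<phi> v else 0)"
  proof (rule sum.cong[OF refl])
    fix e assume "e \<in> E"
    then have "V \<inter> e = e" using assms(3) by auto
    then show "(\<Sum>v\<in>e. \<phi> v) = (\<Sum>v\<in>V. if v \<in> e then \<phi> v else 0)"
      using sum.inter_restrict[OF assms(1), of \<phi> e] by simp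
  qed
  also have "\<dots> = (\<Sum>v\<in>V. \<Sum>e\<in>E. if v \<in> e then \<phi> v else 0)" by (rule sum.swap)
  also have "\<dots> = (\<Sum>v\<in>V. of_nat (degree E v) * \<phi> v)"
    unfolding degree_def by (intro sum.cong) (simp_all add: sum.inter_filter[OF assms(2), symmetric])
  finally show ?thesis .
qed

lemma sum_degree_eq_twice_card:
  assumes "finite V" "finite E" "\<forall>e\<in>E. e \<subseteq> V \<and> card e = 2"
  shows "(\<Sum>v\<in>V. degree E v) = 2 * card E"
proof -
  have "(\<Sum>e\<in>E. \<Sum>v\<in>e. (1::nat)) = (\<Sum>v\<in>V. degree E v)"
    using sum_edges_eq_sum_degree[OF assms(1,2), of "\<lambda>_. 1::nat"] assms(3) by simp
  moreover have "(\<Sum>e\<in>E. \<Sum>v\<in>e. (1::nat)) = (\<Sum>e\<in>E. 2)"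
    using assms(3) by (intro sum.cong) auto
  ultimately show ?thesis by simp
qed

lemma SEI_eq_sum_sei_term:
  assumes "simple_graph V E"
  shows "SEI a E = (\<Sum>v\<in>V. sei_term a (degree E v))"
  using sum_edges_eq_sum_degree[of V E "\<lambda>v. a ^ degree E v"] assms
    simple_graph_finite_edges[OF assms]
  unfolding SEI_def sei_term_def simple_graph_def by simp

lemma SEI_eq_sum_sei_excess:
  assumes "simple_graph V E" "\<forall>v\<in>V. 1 \<le> degree E v"
  shows "SEI a E = card V * sei_term a 1 + (\<Sum>v\<in>V. sei_excess a (degree E v - 1))"
proof -
  have "SEI a E = (\<Sum>v\<in>V. sei_term a 1 + sei_excess a (degree E v - 1))"
    unfolding SEI_eq_sum_sei_term[OF assms(1)] sei_excess_def
    using assms(2) by (intro sum.cong) auto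
  then show ?thesis by (simp add: sum.distrib)
qed

lemma degree_insert:
  assumes "finite E" "e \<notin> E"
  shows "degree (insert e E) v = degree E v + (if v \<in> e then 1 else 0)"
proof -
  have "{e'\<in>insert e E. v \<in> e'}
      = (if v \<in> e then insert e {e'\<in>E. v \<in> e'} else {e'\<in>E. v \<in> e'})"
    by auto
  then show ?thesis unfolding degree_def using assms by simp
qed

lemma degree_add_degree_le:
  assumes "finite E" "\<forall>e\<in>E. card e = 2" "x \<noteq> y"
  shows "degree E x + degree E y \<le> card E + 1"
proof -
  let ?A = "{e\<in>E. x \<in> e}" and ?B = "{e\<in>E. y \<in> e}"
  have "card ?A + card ?B = card (?A \<union> ?B) + card (?A \<inter> ?B)"
    by (rule card_Un_Int) (use assms in auto)
  moreover have "card (?A \<union> ?B) \<le> card E" by (rule card_mono) (use assms in auto)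
  moreover have "?A \<inter> ?B \<subseteq> {{x,y}}" using assms by (fastforce simp: card_2_iff)
  then have "card (?A \<inter> ?B) \<le> 1" using card_mono[of "{{x,y}}"] by fastforce
  ultimately show ?thesis unfolding degree_def by linarith
qed

text \<open>Adding an edge \<open>{x, y}\<close> raises the sum by \<open>\<delta>(p) + \<delta>(q)\<close>, where \<open>\<delta>\<close> is the increment of
\<open>\<phi>\<close> and \<open>p + q \<le> |E|\<close> are the old degrees; convexity of \<open>\<delta>\<close> bounds this by \<open>\<delta>(0) + \<delta>(|E|)\<close>,
the gain from adding one more edge to a star.\<close>
lemma sum_discrete_convex_degree_le:
  fixes \<phi> :: "nat \<Rightarrow> real"
  assumes "\<phi> 0 = 0" "discrete_convex \<phi>" "discrete_convex (\<lambda>t. \<phi> (t+1) - \<phi> t)"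
    and "finite S" "finite E" "\<forall>e\<in>E. e \<subseteq> S \<and> card e = 2"
  shows "(\<Sum>v\<in>S. \<phi> (degree E v)) \<le> \<phi> (card E) + card E * \<phi> 1"
  using assms(5,6)
proof (induction E rule: finite_induct)
  case empty
  then show ?case by (simp add: degree_def assms(1))
next
  case (insert e E)
  define \<delta> where "\<delta> t = \<phi> (t+1) - \<phi> t" for t
  obtain x y where e: "e = {x,y}" "x \<noteq> y" using insert.prems by (auto simp: card_2_iff)
  have xy: "x \<in> S" "y \<in> S" using insert.prems e by auto
  have deg: "degree (insert e E) v = degree E v + (if v \<in> e then 1 else 0)" for v
    using degree_insert[OF insert.hyps(1,2)] .
  have "(\<Sum>v\<in>S. \<phi> (degree (insert e E) v))
      = (\<Sum>v\<in>S. \<phi> (degree E v)) + (\<Sum>v\<in>S \<inter> e. \<delta> (degree E v))"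
    unfolding sum.inter_restrict[OF assms(4)] sum.distrib[symmetric]
    by (rule sum.cong) (auto simp: deg \<delta>_def)
  also have "S \<inter> e = {x,y}" using e xy by auto
  finally have step: "(\<Sum>v\<in>S. \<phi> (degree (insert e E) v))
      = (\<Sum>v\<in>S. \<phi> (degree E v)) + \<delta> (degree E x) + \<delta> (degree E y)"
    using e by simp
  let ?p = "degree E x" and ?q = "degree E y"
  have "degree (insert e E) x + degree (insert e E) y \<le> card (insert e E) + 1"
    using degree_add_degree_le[of "insert e E" x y] insert e by auto
  then have pq: "?p + ?q \<le> card E" using deg[of x] deg[of y] e insert.hyps by simp
  have "\<delta> ?p - \<delta> 0 \<le> \<delta> (?q + ?p) - \<delta> ?q"
    using discrete_convex_difference_mono[OF assms(3)[folded \<delta>_def], of 0 ?q ?p] by simp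
  moreover have "\<delta> (?q + ?p) \<le> \<delta> (card E)"
    using discrete_convex_increment_mono[OF assms(2), of "?q + ?p" "card E"] pq
    unfolding \<delta>_def by simp
  moreover have "\<phi> (card (insert e E)) + card (insert e E) * \<phi> 1
      = \<phi> (card E) + card E * \<phi> 1 + \<delta> (card E) + \<delta> 0"
    using insert.hyps unfolding \<delta>_def by (simp add: assms(1) algebra_simps)
  ultimately show ?case using step insert by simp
qed

lemma connected_graph_degree_pos:
  assumes "connected_graph V E" "v \<in> V" "2 \<le> card V"
  shows "1 \<le> degree E v"
proof -
  have "finite V" using assms(1) unfolding connected_graph_def simple_graph_def by blast
  then have "1 \<le> card (V - {v})" using assms(2,3) by simp
  then obtain u where u: "u \<in> V" "u \<noteq> v"
    by (metis Diff_iff all_not_in_conv card.empty not_one_le_zero singletonI)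
  have "(v, u) \<in> (adj_rel E)\<^sup>*" using assms(1,2) u(1) unfolding connected_graph_def by blast
  then obtain y where "(v, y) \<in> adj_rel E"
    by (rule converse_rtranclE) (use u in auto)
  then have "{v, y} \<in> {e\<in>E. v \<in> e}" unfolding adj_rel_def by auto
  moreover have "finite E"
    using assms(1) simple_graph_finite_edges unfolding connected_graph_def by blast
  then have "finite {e\<in>E. v \<in> e}" by simp
  ultimately have "0 < card {e\<in>E. v \<in> e}" by (auto simp: card_gt_0_iff)
  then show ?thesis unfolding degree_def by simp
qed

definition dist_to :: "'a set set \<Rightarrow> 'a \<Rightarrow> 'a \<Rightarrow> nat" where
  "dist_to E w v = (LEAST k. (v, w) \<in> adj_rel E ^^ k)"

lemma dist_to_self [simp]: "dist_to E w w = 0"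
  unfolding dist_to_def by (rule Least_eq_0) simp

lemma exists_neighbour_closer:
  assumes "(v, w) \<in> (adj_rel E)\<^sup>*" "v \<noteq> w"
  shows "\<exists>p. {v, p} \<in> E \<and> dist_to E w p < dist_to E w v"
proof -
  obtain k where "(v, w) \<in> adj_rel E ^^ k" using assms(1) rtrancl_power by blast
  then have vk: "(v, w) \<in> adj_rel E ^^ dist_to E w v" unfolding dist_to_def by (rule LeastI)
  then obtain j where j: "dist_to E w v = Suc j" using assms(2) by (cases "dist_to E w v") auto
  obtain p where p: "(v, p) \<in> adj_rel E" "(p, w) \<in> adj_rel E ^^ j"
    using relpow_Suc_D2[OF vk[unfolded j]] by blast
  have "dist_to E w p \<le> j" unfolding dist_to_def using p(2) by (rule Least_le)
  then show ?thesis using p(1) j unfolding adj_rel_def by auto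
qed

lemma dist_to_pos:
  assumes "(v, w) \<in> (adj_rel E)\<^sup>*" "v \<noteq> w"
  shows "0 < dist_to E w v"
  using exists_neighbour_closer[OF assms] by auto

text \<open>Every vertex \<open>v \<noteq> w\<close> contributes one edge towards \<open>w\<close>, namely \<open>{v, w}\<close> if present
and otherwise an edge to a neighbour closer to \<open>w\<close>; these edges are distinct because the
distance to \<open>w\<close> strictly decreases along them.\<close>
lemma connected_graph_obtain_spanning_edges:
  assumes conn: "connected_graph V E" and w: "w \<in> V"
  obtains T where "T \<subseteq> E" "{e\<in>E. w \<in> e} \<subseteq> T" "card T + 1 = card V"
    "\<forall>v\<in>V - {w}. \<exists>e\<in>T. v \<in> e"
proof -
  have sg: "simple_graph V E" and reach: "\<forall>u\<in>V. \<forall>v\<in>V. (u, v) \<in> (adj_rel E)\<^sup>*"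
    using conn unfolding connected_graph_def by auto
  let ?d = "dist_to E w"
  have "\<forall>v\<in>V - {w}. \<exists>p. {v, p} \<in> E \<and> ?d p < ?d v \<and> ({v, w} \<in> E \<longrightarrow> p = w)"
  proof
    fix v assume v: "v \<in> V - {w}"
    then have vw: "(v, w) \<in> (adj_rel E)\<^sup>*" using reach w by blast
    show "\<exists>p. {v, p} \<in> E \<and> ?d p < ?d v \<and> ({v, w} \<in> E \<longrightarrow> p = w)"
    proof (cases "{v, w} \<in> E")
      case True
      then show ?thesis using dist_to_pos[OF vw] v by auto
    next
      case False
      then show ?thesis using exists_neighbour_closer[OF vw] v by auto
    qed
  qed
  then obtain p
    where p: "\<forall>v\<in>V - {w}. {v, p v} \<in> E \<and> ?d (p v) < ?d v \<and> ({v, w} \<in> E \<longrightarrow> p v = w)"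
    by metis
  define T where "T = (\<lambda>v. {v, p v}) ` (V - {w})"
  have inj: "inj_on (\<lambda>v. {v, p v}) (V - {w})"
  proof (rule inj_onI)
    fix u v assume uv: "u \<in> V - {w}" "v \<in> V - {w}" "{u, p u} = {v, p v}"
    show "u = v"
    proof (rule ccontr)
      assume "u \<noteq> v"
      then have "u = p v" "v = p u" using uv(3) by (auto simp: doubleton_eq_iff)
      moreover have "?d (p v) < ?d v" "?d (p u) < ?d u" using p uv(1,2) by auto
      ultimately show False by simp
    qed
  qed
  have "{e\<in>E. w \<in> e} \<subseteq> T"
  proof
    fix e assume e: "e \<in> {e\<in>E. w \<in> e}"
    then obtain v where v: "e = {v, w}" "v \<noteq> w"
      using sg unfolding simple_graph_def by (fastforce simp: card_2_iff)
    then have "v \<in> V - {w}" "{v, w} \<in> E" using e sg unfolding simple_graph_def by auto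
    then show "e \<in> T" using p v unfolding T_def by force
  qed
  moreover have "card T + 1 = card V"
  proof -
    have "0 < card V" using w sg unfolding simple_graph_def by (auto simp: card_gt_0_iff)
    then show ?thesis
      unfolding T_def card_image[OF inj] using w sg unfolding simple_graph_def by simp
  qed
  moreover have "T \<subseteq> E" using p unfolding T_def by auto
  moreover have "\<forall>v\<in>V - {w}. \<exists>e\<in>T. v \<in> e" unfolding T_def by blast
  ultimately show ?thesis using that by blast
qed

lemma degree_diff_less:
  assumes "finite E" "T \<subseteq> E" "e \<in> T" "v \<in> e"
  shows "degree (E - T) v < degree E v"
proof -
  have "{e\<in>E - T. v \<in> e} \<subset> {e\<in>E. v \<in> e}" using assms(2-4) by blast
  then show ?thesis unfolding degree_def using assms(1) by (intro psubset_card_mono) auto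
qed

lemma sum_sei_excess_le:
  fixes V :: "'a set"
  assumes a: "a > 1" and sg: "simple_graph V E" and card_E: "card E + 1 = card V + c"
    and deg_pos: "\<forall>v\<in>V. 1 \<le> degree E v"
    and w: "w \<in> V" and max_deg: "\<forall>v\<in>V. degree E v \<le> degree E w"
    and T: "T \<subseteq> E" "{e\<in>E. w \<in> e} \<subseteq> T" "card T + 1 = card V"
      "\<forall>v\<in>V - {w}. \<exists>e\<in>T. v \<in> e"
  shows "(\<Sum>v\<in>V. sei_excess a (degree E v - 1))
    \<le> sei_excess a (card V - 2) + sei_excess a c + c * sei_excess a 1"
proof -
  define n d S H where "n = card V" and "d = degree E w" and "S = V - {w}" and "H = E - T"
  have fin_V: "finite V" and edges: "\<forall>e\<in>E. e \<subseteq> V \<and> card e = 2"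
    using sg unfolding simple_graph_def by auto
  have fin_E: "finite E" using simple_graph_finite_edges[OF sg] .
  have fin_S: "finite S" and card_S: "card S = n - 1"
    using fin_V w unfolding S_def n_def by auto
  have "d \<le> card T"
    unfolding d_def degree_def using T(1,2) fin_E by (intro card_mono) (auto intro: finite_subset)
  then have d: "1 \<le> d" "d \<le> n - 1" using deg_pos w T(3) unfolding d_def n_def by auto
  have edges_H: "\<forall>e\<in>H. e \<subseteq> S \<and> card e = 2" using edges T(2) unfolding H_def S_def by auto
  have card_H: "card H = c"
    using card_Diff_subset[OF finite_subset[OF T(1) fin_E] T(1)] card_E T(3)
    unfolding H_def by simp
  have deg_H: "\<forall>v\<in>S. degree H v \<le> degree E v - 1 \<and> degree E v - 1 \<le> d - 1"
  proof
    fix v assume v: "v \<in> S"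
    then obtain e where "e \<in> T" "v \<in> e" using T(4) unfolding S_def by blast
    then have "degree H v < degree E v"
      using degree_diff_less[OF fin_E T(1)] unfolding H_def by blast
    moreover have "degree E v \<le> d" using max_deg v unfolding S_def d_def by blast
    ultimately show "degree H v \<le> degree E v - 1 \<and> degree E v - 1 \<le> d - 1" by linarith
  qed
  have "sum (degree E) S + d = 2 * card E"
    using sum_degree_eq_twice_card[OF fin_V fin_E edges] sum.remove[OF fin_V w, of "degree E"]
    unfolding S_def d_def by simp
  moreover have "sum (degree H) S = 2 * c"
    using sum_degree_eq_twice_card[OF fin_S _ edges_H] card_H fin_E unfolding H_def by simp
  moreover have "(\<Sum>v\<in>S. degree E v - 1) + (n - 1) = sum (degree E) S"
  proof -
    have "(\<Sum>v\<in>S. degree E v - 1 + 1) = sum (degree E) S"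
      using deg_pos unfolding S_def by (intro sum.cong) auto
    then show ?thesis using card_S by (simp add: sum_Suc)
  qed
  ultimately have sum_S: "(\<Sum>v\<in>S. degree E v - 1) = sum (degree H) S + (n - 1 - d)"
    using card_E d unfolding n_def by linarith
  have "(\<Sum>v\<in>S. sei_excess a (degree E v - 1))
      \<le> (\<Sum>v\<in>S. sei_excess a (degree H v))
        + sei_excess a (d - 1 + (n - 1 - d)) - sei_excess a (d - 1)"
    using sum_discrete_convex_le_concentrated[OF discrete_convex_sei_excess[OF a] fin_S deg_H sum_S] .
  moreover have "(\<Sum>v\<in>S. sei_excess a (degree H v)) \<le> sei_excess a c + c * sei_excess a 1"
    using sum_discrete_convex_degree_le[OF sei_excess_0 discrete_convex_sei_excess[OF a]
        discrete_convex_sei_excess_increment[OF a] fin_S _ edges_H] card_H fin_E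
    unfolding H_def by simp
  moreover have "d - 1 + (n - 1 - d) = n - 2" using d by simp
  moreover have "(\<Sum>v\<in>V. sei_excess a (degree E v - 1))
      = sei_excess a (d - 1) + (\<Sum>v\<in>S. sei_excess a (degree E v - 1))"
    using sum.remove[OF fin_V w] unfolding S_def d_def by simp
  ultimately show ?thesis unfolding n_def by simp
qed

lemma cyc_class_SEI_le:
  fixes V :: "'a set"
  assumes a: "a > 1" and cls: "cyc_class c n V E" and n: "2 \<le> n"
  shows "SEI a E
    \<le> n * sei_term a 1 + sei_excess a (n - 2) + sei_excess a c + c * sei_excess a 1"
proof -
  have conn: "connected_graph V E" and card_V: "card V = n"
    and card_E: "card E + 1 = card V + c"
    using cls unfolding cyc_class_def by auto
  then have sg: "simple_graph V E" and fin_V: "finite V" and "V \<noteq> {}"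
    unfolding connected_graph_def simple_graph_def by auto
  have deg_pos: "\<forall>v\<in>V. 1 \<le> degree E v"
    using connected_graph_degree_pos[OF conn] card_V n by blast
  have "Max (degree E ` V) \<in> degree E ` V" using fin_V \<open>V \<noteq> {}\<close> by (intro Max_in) auto
  then obtain w where w: "w \<in> V" "degree E w = Max (degree E ` V)" by auto
  then have max_deg: "\<forall>v\<in>V. degree E v \<le> degree E w" using fin_V by simp
  obtain T where "T \<subseteq> E" "{e\<in>E. w \<in> e} \<subseteq> T" "card T + 1 = card V"
    "\<forall>v\<in>V - {w}. \<exists>e\<in>T. v \<in> e"
    using connected_graph_obtain_spanning_edges[OF conn w(1)] .
  from sum_sei_excess_le[OF a sg card_E deg_pos w(1) max_deg this]
  show ?thesis using SEI_eq_sum_sei_excess[OF sg deg_pos] card_V by simp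
qed

definition star_fan_E :: "nat \<Rightarrow> nat \<Rightarrow> nat set set" where
  "star_fan_E c n = star_E n \<union> (\<lambda>j. {1, j}) ` {2..c+1}"

lemma star_E_eq_image: "star_E n = (\<lambda>i. {0, i}) ` {1..<n}"
  unfolding star_E_def by auto

lemma star_fan_E_cases:
  "star_E n = star_fan_E 0 n" "Sn_plus_E n = star_fan_E 1 n" "B1_E n = star_fan_E 2 n"
  "G4_E n = star_fan_E 3 n" "H4_E n = star_fan_E 4 n"
  unfolding star_fan_E_def Sn_plus_E_def B1_E_def G4_E_def H4_E_def
  by (auto simp: numeral_eq_Suc atLeastAtMostSuc_conv)

lemma degree_star_fan_E:
  assumes "c + 2 \<le> n" "v < n"
  shows "degree (star_fan_E c n) v
    = (if v = 0 then n - 1 else if v = 1 then c + 1 else if v \<le> c + 1 then 2 else 1)"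
proof -
  have inj0: "inj_on (\<lambda>i. {0::nat, i}) A" and inj1: "inj_on (\<lambda>j. {1::nat, j}) A" for A
    by (auto simp: inj_on_def doubleton_eq_iff)
  consider "v = 0" | "v = 1" | "2 \<le> v" "v \<le> c + 1" | "c + 2 \<le> v" by linarith
  then show ?thesis
  proof cases
    case 1
    then have "{e\<in>star_fan_E c n. v \<in> e} = (\<lambda>i. {0, i}) ` {1..<n}"
      unfolding star_fan_E_def star_E_eq_image using assms by auto
    then show ?thesis unfolding degree_def using 1 by (simp add: card_image[OF inj0])
  next
    case 2
    then have "{e\<in>star_fan_E c n. v \<in> e} = (\<lambda>j. {1, j}) ` ({0} \<union> {2..c+1})"
      unfolding star_fan_E_def star_E_eq_image using assms by (auto simp: insert_commute)
    then have "degree (star_fan_E c n) v = card ({0} \<union> {2..c+1})"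
      unfolding degree_def by (simp only: card_image[OF inj1])
    then show ?thesis using 2 by simp
  next
    case 3
    then have "{e\<in>star_fan_E c n. v \<in> e} = {{0, v}, {1, v}}"
      unfolding star_fan_E_def star_E_eq_image using assms by (auto simp: insert_commute)
    moreover have "{0, v} \<noteq> {1, v}" using 3 by (auto simp: doubleton_eq_iff)
    ultimately show ?thesis unfolding degree_def using 3 by simp
  next
    case 4
    then have "{e\<in>star_fan_E c n. v \<in> e} = {{0, v}}"
      unfolding star_fan_E_def star_E_eq_image using assms by (auto simp: doubleton_eq_iff)
    then show ?thesis unfolding degree_def using 4 by simp
  qed
qed

lemma cyc_class_star_fan_E:
  assumes "c + 2 \<le> n"
  shows "cyc_class c n (star_V n) (star_fan_E c n)"
proof -
  let ?E = "star_fan_E c n"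
  have sg: "simple_graph (star_V n) ?E"
    unfolding simple_graph_def star_V_def star_fan_E_def star_E_eq_image using assms by auto
  have to_0: "(u, 0) \<in> (adj_rel ?E)\<^sup>*" if "u < n" for u
  proof (cases "u = 0")
    case False
    then have "{u, 0} \<in> ?E"
      unfolding star_fan_E_def star_E_eq_image using that by (auto simp: insert_commute)
    then show ?thesis unfolding adj_rel_def by auto
  qed simp
  have from_0: "(0, u) \<in> (adj_rel ?E)\<^sup>*" if "u < n" for u
  proof (cases "u = 0")
    case False
    then have "{0, u} \<in> ?E" unfolding star_fan_E_def star_E_eq_image using that by auto
    then show ?thesis unfolding adj_rel_def by auto
  qed simp
  have "connected_graph (star_V n) ?E"
    unfolding connected_graph_def
  proof (intro conjI ballI)
    fix u v assume "u \<in> star_V n" "v \<in> star_V n"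
    then show "(u, v) \<in> (adj_rel ?E)\<^sup>*"
      using rtrancl_trans[OF to_0 from_0] unfolding star_V_def by simp
  qed (use sg assms in \<open>auto simp: star_V_def\<close>)
  moreover have "card ?E = (n - 1) + c"
  proof -
    have disj: "(\<lambda>i. {0::nat, i}) ` {1..<n} \<inter> (\<lambda>j. {1, j}) ` {2..c+1} = {}"
    proof (rule equals0I)
      fix e assume "e \<in> (\<lambda>i. {0::nat, i}) ` {1..<n} \<inter> (\<lambda>j. {1, j}) ` {2..c+1}"
      then obtain i j where "e = {0, i}" "e = {1, j}" "j \<in> {2..c+1}" by blast
      then show False
        by (metis atLeastAtMost_iff insert_iff not_numeral_le_zero singleton_iff zero_neq_one)
    qed
    have "inj_on (\<lambda>i. {0::nat, i}) {1..<n}" "inj_on (\<lambda>j. {1::nat, j}) {2..c+1}"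
      by (auto simp: inj_on_def doubleton_eq_iff)
    then show ?thesis
      unfolding star_fan_E_def star_E_eq_image
      using card_Un_disjoint[OF _ _ disj] card_image[of "\<lambda>i. {0::nat, i}"]
        card_image[of "\<lambda>j. {1::nat, j}"]
      by simp
  qed
  ultimately show ?thesis unfolding cyc_class_def star_V_def using assms by simp
qed

lemma SEI_star_fan_E:
  assumes n: "c + 2 \<le> n"
  shows "SEI a (star_fan_E c n)
    = n * sei_term a 1 + sei_excess a (n - 2) + sei_excess a c + c * sei_excess a 1"
proof -
  let ?f = "\<lambda>v. sei_term a (degree (star_fan_E c n) v)"
  note deg = degree_star_fan_E[OF n]
  have sg: "simple_graph {0..<n} (star_fan_E c n)"
    using cyc_class_star_fan_E[OF n] unfolding cyc_class_def connected_graph_def star_V_def by auto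
  have "SEI a (star_fan_E c n) = (\<Sum>v\<in>{0..<n}. ?f v)"
    using SEI_eq_sum_sei_term[OF sg] .
  also have "\<dots> = ?f 0 + ?f 1 + (\<Sum>v\<in>{2..<c+2}. ?f v) + (\<Sum>v\<in>{c+2..<n}. ?f v)"
    using n sum.atLeastLessThan_concat[of 2 "c+2" n ?f]
    by (simp add: sum.atLeast_Suc_lessThan numeral_2_eq_2)
  also have "(\<Sum>v\<in>{2..<c+2}. ?f v) = (\<Sum>v\<in>{2..<c+2}. sei_term a 2)"
    using n deg by (intro sum.cong) auto
  also have "(\<Sum>v\<in>{c+2..<n}. ?f v) = (\<Sum>v\<in>{c+2..<n}. sei_term a 1)"
    using deg by (intro sum.cong) auto
  finally have "SEI a (star_fan_E c n)
      = sei_term a (n - 1) + sei_term a (c + 1) + c * sei_term a 2 + (n - (c + 2)) * sei_term a 1"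
    using deg n by simp
  also have "\<dots> = n * sei_term a 1 + sei_excess a (n - 2) + sei_excess a c + c * sei_excess a 1"
    using n by (simp add: sei_excess_def numeral_2_eq_2 Suc_diff_Suc of_nat_diff algebra_simps)
  finally show ?thesis .
qed

lemma is_SEI_max_star_fan_E:
  assumes "a > 1" "c + 2 \<le> n"
  shows "is_SEI_max a c n (star_V n) (star_fan_E c n) TYPE('a)"
proof -
  have "SEI a E \<le> SEI a (star_fan_E c n)" if "cyc_class c n (V :: 'a set) E" for V E
    using cyc_class_SEI_le[OF assms(1) that] SEI_star_fan_E[OF assms(2)] assms(2)
    by simp
  then show ?thesis unfolding is_SEI_max_def using cyc_class_star_fan_E[OF assms(2)] by blast
qed

lemma is_SEI_max_single_vertex: "is_SEI_max a 0 1 (star_V 1) (star_E 1) TYPE('a)"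
proof -
  have E: "star_E 1 = {}" unfolding star_E_def by auto
  have "cyc_class 0 1 (star_V 1) (star_E 1)"
    unfolding cyc_class_def connected_graph_def simple_graph_def star_V_def E by auto
  moreover have "SEI a E \<le> SEI a (star_E 1)" if "cyc_class 0 1 (V :: 'a set) E" for V E
  proof -
    have "finite E" "card E = 0"
      using that simple_graph_finite_edges unfolding cyc_class_def connected_graph_def by auto
    then show ?thesis unfolding E SEI_def by simp
  qed
  ultimately show ?thesis unfolding is_SEI_max_def by blast
qed

theorem theorem8:
  fixes a :: real and n :: nat
  assumes "a > 1"
  shows "(n \<ge> 1 \<longrightarrow> is_SEI_max a 0 n (star_V n) (star_E n) TYPE('a))
    \<and> (n \<ge> 3 \<longrightarrow> is_SEI_max a 1 n (star_V n) (Sn_plus_E n) TYPE('a))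
    \<and> (n \<ge> 4 \<longrightarrow> is_SEI_max a 2 n (star_V n) (B1_E n) TYPE('a))
    \<and> (n \<ge> 5 \<longrightarrow> is_SEI_max a 3 n (star_V n) (G4_E n) TYPE('a))
    \<and> (n \<ge> 6 \<longrightarrow> is_SEI_max a 4 n (star_V n) (H4_E n) TYPE('a))"
proof (intro conjI impI)
  assume "n \<ge> 1"
  then show "is_SEI_max a 0 n (star_V n) (star_E n) TYPE('a)"
    using is_SEI_max_single_vertex is_SEI_max_star_fan_E[OF assms, of 0 n] star_fan_E_cases(1)
    by (cases "n = 1") auto
qed (simp_all add: star_fan_E_cases is_SEI_max_star_fan_E[OF assms])

end
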